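(* The continuum $|\mathbb G|$ is hereditarily unicoherent, i.e. the intersection of any two subcontinua of $|\mathbb G|$ is connected.
   Context: A graph is a pair $A=(V(A),E(A))$ with $E(A)\subseteq V(A)^2$ reflexive and symmetric; a topological graph additionally has $V$ compact, second countable, zero-dimensional and $E$ closed. Epimorphisms are (continuous) edge-preserving maps surjective on vertices and edges. A vertex set $S$ is disconnected if it splits into two nonempty closed subsets with no edges between them; otherwise connected; components are maximal connected subsets. An epimorphism $f\colon A\to B$ is confluent if for every connected $Q\subseteq V(B)$ each component $C$ of $f^{-1}(Q)$ has $f(C)=Q$. $\mathbb G$ is the projective Fraïssé limit of the class of finite connected graphs with confluent epimorphisms: the unique topological graph such that (1) every finite connected graph is a confluent epimorphic image of $\mathbb G$; (2) for finite connected $A,B$ and confluent epimorphisms $f\colon\mathbb G\to A$, $g\colon B\to A$ there is a confluent epimorphism $h\colon\mathbb G\to B$ with $f=g\circ h$; (3) for each $\varepsilon>0$ some confluent epimorphism from $\mathbb G$ onto a finite connected graph has all point-preimages of diameter $<\varepsilon$. The edge relation of $\mathbb G$ is an equivalence relation and $|\mathbb G|=V(\mathbb G)/E(\mathbb G)$ is its topological realization. *)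

theory Defs
  imports "HOL-Analysis.Analysis"
begin

text \<open>A graph is given by a topology X (vertex set = topspace X) and an edge
relation E. Finite graphs carry the discrete topology.\<close>

definition graph_rel :: "'a set \<Rightarrow> ('a \<times> 'a) set \<Rightarrow> bool" where
  "graph_rel V E \<longleftrightarrow> E \<subseteq> V \<times> V \<and> (\<forall>v\<in>V. (v, v) \<in> E) \<and> (\<forall>u v. (u, v) \<in> E \<longrightarrow> (v, u) \<in> E)"

definition topological_graph :: "'a topology \<Rightarrow> ('a \<times> 'a) set \<Rightarrow> bool" where
  "topological_graph X E \<longleftrightarrow>
     graph_rel (topspace X) E \<and> compact_space X \<and> second_countable X \<and> X dim_le 0 \<and>
     closedin (prod_topology X X) E"

definition gdisconnected :: "'a topology \<Rightarrow> ('a \<times> 'a) set \<Rightarrow> 'a set \<Rightarrow> bool" where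
  "gdisconnected X E S \<longleftrightarrow>
     (\<exists>P Q. P \<noteq> {} \<and> Q \<noteq> {} \<and> P \<union> Q = S \<and> P \<inter> Q = {} \<and>
        closedin (subtopology X S) P \<and> closedin (subtopology X S) Q \<and>
        (\<forall>p\<in>P. \<forall>q\<in>Q. (p, q) \<notin> E))"

definition gconnected :: "'a topology \<Rightarrow> ('a \<times> 'a) set \<Rightarrow> 'a set \<Rightarrow> bool" where
  "gconnected X E S \<longleftrightarrow> S \<subseteq> topspace X \<and> \<not> gdisconnected X E S"

definition gcomponent :: "'a topology \<Rightarrow> ('a \<times> 'a) set \<Rightarrow> 'a set \<Rightarrow> 'a set \<Rightarrow> bool" where
  "gcomponent X E S C \<longleftrightarrow>
     C \<noteq> {} \<and> C \<subseteq> S \<and> gconnected X E C \<and>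
     (\<forall>D. C \<subseteq> D \<and> D \<subseteq> S \<and> gconnected X E D \<longrightarrow> D = C)"

definition epimorphism ::
  "'a topology \<Rightarrow> ('a \<times> 'a) set \<Rightarrow> 'b topology \<Rightarrow> ('b \<times> 'b) set \<Rightarrow> ('a \<Rightarrow> 'b) \<Rightarrow> bool" where
  "epimorphism X E Y F f \<longleftrightarrow>
     continuous_map X Y f \<and> f ` topspace X = topspace Y \<and>
     (\<lambda>(a, b). (f a, f b)) ` E = F"

definition confluent ::
  "'a topology \<Rightarrow> ('a \<times> 'a) set \<Rightarrow> 'b topology \<Rightarrow> ('b \<times> 'b) set \<Rightarrow> ('a \<Rightarrow> 'b) \<Rightarrow> bool" where
  "confluent X E Y F f \<longleftrightarrow>
     epimorphism X E Y F f \<and>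
     (\<forall>Q C. Q \<subseteq> topspace Y \<and> gconnected Y F Q \<and>
            gcomponent X E {x \<in> topspace X. f x \<in> Q} C \<longrightarrow> f ` C = Q)"

text \<open>Finite connected graphs, represented (up to isomorphism) with vertices in nat
and the discrete topology.\<close>
definition finite_connected_graph :: "nat set \<Rightarrow> (nat \<times> nat) set \<Rightarrow> bool" where
  "finite_connected_graph V E \<longleftrightarrow>
     finite V \<and> V \<noteq> {} \<and> graph_rel V E \<and> gconnected (discrete_topology V) E V"

text \<open>The defining properties (1)-(3) of the projective Fraisse limit G, for a
topological graph whose vertex set V lies in a metric space (giving the diameter).\<close>
definition is_Fraisse_limit_G :: "('a::metric_space) set \<Rightarrow> ('a \<times> 'a) set \<Rightarrow> bool" where
  "is_Fraisse_limit_G V E \<longleftrightarrow>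
     topological_graph (top_of_set V) E \<and>
     (\<forall>A EA. finite_connected_graph A EA \<longrightarrow>
        (\<exists>f. confluent (top_of_set V) E (discrete_topology A) EA f)) \<and>
     (\<forall>A EA B EB f g. finite_connected_graph A EA \<and> finite_connected_graph B EB \<and>
        confluent (top_of_set V) E (discrete_topology A) EA f \<and>
        confluent (discrete_topology B) EB (discrete_topology A) EA g \<longrightarrow>
        (\<exists>h. confluent (top_of_set V) E (discrete_topology B) EB h \<and>
             (\<forall>x\<in>V. f x = g (h x)))) \<and>
     (\<forall>\<epsilon>>0. \<exists>A EA f. finite_connected_graph A EA \<and>
        confluent (top_of_set V) E (discrete_topology A) EA f \<and>
        (\<forall>a\<in>A. diameter {x \<in> V. f x = a} < \<epsilon>))"

definition subcontinuum :: "'a topology \<Rightarrow> 'a set \<Rightarrow> bool" where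
  "subcontinuum Y K \<longleftrightarrow> K \<subseteq> topspace Y \<and> K \<noteq> {} \<and> compactin Y K \<and> connectedin Y K"

definition hereditarily_unicoherent :: "'a topology \<Rightarrow> bool" where
  "hereditarily_unicoherent Y \<longleftrightarrow>
     (\<forall>K L. subcontinuum Y K \<and> subcontinuum Y L \<longrightarrow> connectedin Y (K \<inter> L))"

end

theory Submission
  imports Defs
begin

(* Pull back two subcontinua K, L of |G| along the quotient map q. Since the edge relation is
   compact, q is a proper map, so the preimages are compact and connected (in the graph sense)
   subsets of G, and it suffices to show that their intersection is connected.

   Suppose it splits into compact pieces M1, M2 with no edges between them. Take a confluent map f
   from G onto a finite connected graph A whose fibres are much smaller than the gap between M1 and
   M2 along edges. The vertices C of A having a preimage close to M2 then form a union of
   edge-components of f(K) \<inter> f(L) that contains the image of a point of M2 but not the image of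
   a point of M1. Sign the edges of f(L) that cross C. A balancing of this signing would be
   constant along the connected set f(K) but would change exactly across C along f(L), which is
   impossible. So the signing is unbalanced, the signed double cover of A is a finite connected
   graph, and its projection onto A is confluent. By the amalgamation property f lifts through
   the double cover to a map h on G; the layer of h is a balancing of the pulled-back signing on G,
   and the same argument applied to K and L gives the contradiction. *)

section \<open>Connected vertex sets\<close>

lemma gconnected_discrete_topology_iff:
  "gconnected (discrete_topology U) F S \<longleftrightarrow>
     S \<subseteq> U \<and> (\<forall>P\<subseteq>S. (\<forall>p\<in>P. \<forall>q\<in>S. (p, q) \<in> F \<longrightarrow> q \<in> P) \<longrightarrow> P = {} \<or> P = S)"
    (is "_ \<longleftrightarrow> _ \<and> ?closed_trivial")
proof (cases "S \<subseteq> U")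
  case True
  have disconnected: "gdisconnected (discrete_topology U) F S \<longleftrightarrow> \<not> ?closed_trivial"
  proof
    assume "gdisconnected (discrete_topology U) F S"
    then obtain P Q where "P \<noteq> {}" "Q \<noteq> {}" "P \<union> Q = S" "P \<inter> Q = {}"
      "\<forall>p\<in>P. \<forall>q\<in>Q. (p, q) \<notin> F"
      unfolding gdisconnected_def by blast
    then have "P \<subseteq> S" "\<forall>p\<in>P. \<forall>q\<in>S. (p, q) \<in> F \<longrightarrow> q \<in> P" "P \<noteq> S"
      by blast+
    with \<open>P \<noteq> {}\<close> show "\<not> ?closed_trivial"
      by blast
  next
    assume "\<not> ?closed_trivial"
    then obtain P where "P \<subseteq> S" "\<forall>p\<in>P. \<forall>q\<in>S. (p, q) \<in> F \<longrightarrow> q \<in> P" "P \<noteq> {}" "P \<noteq> S"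
      by blast
    with True show "gdisconnected (discrete_topology U) F S"
      unfolding gdisconnected_def by (intro exI[of _ P] exI[of _ "S - P"]) (auto simp: Int_absorb1)
  qed
  show ?thesis
    unfolding gconnected_def disconnected topspace_discrete_topology not_not ..
qed (simp add: gconnected_def)

lemma gconnected_discrete_edge_closed:
  assumes "gconnected (discrete_topology U) F S" "P \<subseteq> S"
    and "\<And>p q. p \<in> P \<Longrightarrow> q \<in> S \<Longrightarrow> (p, q) \<in> F \<Longrightarrow> q \<in> P"
  shows "P = {} \<or> P = S"
  using assms unfolding gconnected_discrete_topology_iff by blast

lemma gconnected_discrete_insert:
  assumes C: "gconnected (discrete_topology U) F C"
    and "c \<in> C" "v \<in> U" "(c, v) \<in> F" "(v, c) \<in> F"
  shows "gconnected (discrete_topology U) F (insert v C)"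
  unfolding gconnected_discrete_topology_iff
proof (intro conjI allI impI)
  show "insert v C \<subseteq> U"
    using C \<open>v \<in> U\<close> by (simp add: gconnected_discrete_topology_iff)
  fix P assume P: "P \<subseteq> insert v C" "\<forall>p\<in>P. \<forall>q\<in>insert v C. (p, q) \<in> F \<longrightarrow> q \<in> P"
  have "P \<inter> C = {} \<or> P \<inter> C = C"
    by (rule gconnected_discrete_edge_closed[OF C]) (use P in auto)
  then show "P = {} \<or> P = insert v C"
  proof
    assume "P \<inter> C = {}"
    with P have "P \<subseteq> {v}" "c \<notin> P"
      using \<open>c \<in> C\<close> by auto
    with P(2) \<open>(v, c) \<in> F\<close> \<open>c \<in> C\<close> show ?thesis
      by auto
  next
    assume "P \<inter> C = C"
    with P \<open>c \<in> C\<close> \<open>(c, v) \<in> F\<close> show ?thesis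
      by auto
  qed
qed

lemma closedin_discrete_preimage:
  assumes "continuous_map X (discrete_topology U) \<phi>"
  shows "closedin X {x \<in> topspace X. R (\<phi> x)}"
proof -
  have "{x \<in> topspace X. R (\<phi> x)} = {x \<in> topspace X. \<phi> x \<in> {u \<in> U. R u}}"
    using continuous_map_image_subset_topspace[OF assms] by auto
  also have "closedin X \<dots>"
    by (rule closedin_continuous_map_preimage[OF assms]) simp
  finally show ?thesis .
qed

lemma continuous_map_discrete_combine:
  assumes "continuous_map X (discrete_topology U) f" "continuous_map X (discrete_topology W) g"
  shows "continuous_map X (discrete_topology UNIV) (\<lambda>x. h (f x) (g x))"
proof -
  have "continuous_map X (discrete_topology (U \<times> W)) (\<lambda>x. (f x, g x))"
    unfolding prod_topology_discrete_topology using assms by (rule continuous_map_pairedI)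
  moreover have "continuous_map (discrete_topology (U \<times> W)) (discrete_topology UNIV) (case_prod h)"
    by simp
  ultimately have "continuous_map X (discrete_topology UNIV) (case_prod h \<circ> (\<lambda>x. (f x, g x)))"
    by (rule continuous_map_compose)
  then show ?thesis
    by (simp add: comp_def)
qed

lemma gconnected_propagate:
  assumes S: "gconnected X F S" and \<phi>: "continuous_map X (discrete_topology U) \<phi>"
    and step: "\<And>x y. x \<in> S \<Longrightarrow> y \<in> S \<Longrightarrow> (x, y) \<in> F \<Longrightarrow> R (\<phi> x) \<Longrightarrow> R (\<phi> y)"
    and "x \<in> S" "R (\<phi> x)" "y \<in> S"
  shows "R (\<phi> y)"
proof (rule ccontr)
  assume "\<not> R (\<phi> y)"
  have ST: "S \<subseteq> topspace X"
    using S by (simp add: gconnected_def)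
  have closed: "closedin (subtopology X S) {z \<in> S. Q (\<phi> z)}" for Q
  proof -
    have "{z \<in> S. Q (\<phi> z)} = S \<inter> {z \<in> topspace X. Q (\<phi> z)}"
      using ST by blast
    then show ?thesis
      by (simp add: closedin_subtopology_Int_closed closedin_discrete_preimage[OF \<phi>])
  qed
  have "gdisconnected X F S"
    unfolding gdisconnected_def
  proof (intro exI conjI)
    show "{z \<in> S. R (\<phi> z)} \<noteq> {}" "{z \<in> S. \<not> R (\<phi> z)} \<noteq> {}"
      using assms(4-6) \<open>\<not> R (\<phi> y)\<close> by blast+
    show "{z \<in> S. R (\<phi> z)} \<union> {z \<in> S. \<not> R (\<phi> z)} = S"
      "{z \<in> S. R (\<phi> z)} \<inter> {z \<in> S. \<not> R (\<phi> z)} = {}"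
      by blast+
    show "\<forall>p\<in>{z \<in> S. R (\<phi> z)}. \<forall>q\<in>{z \<in> S. \<not> R (\<phi> z)}. (p, q) \<notin> F"
      using step by blast
  qed (rule closed)+
  with S show False
    by (simp add: gconnected_def)
qed

lemma gconnected_invariant:
  assumes "gconnected X F S" "continuous_map X (discrete_topology U) \<phi>"
    and "\<And>x y. x \<in> S \<Longrightarrow> y \<in> S \<Longrightarrow> (x, y) \<in> F \<Longrightarrow> \<phi> x = \<phi> y"
    and "x \<in> S" "y \<in> S"
  shows "\<phi> x = \<phi> y"
  using gconnected_propagate[OF assms(1,2), where R = "\<lambda>u. u = \<phi> x"] assms(3-5) by metis

lemma gconnected_image_discrete:
  assumes S: "gconnected X F S" and g: "continuous_map X (discrete_topology A) g"
    and edges: "\<And>x y. (x, y) \<in> F \<Longrightarrow> (g x, g y) \<in> FA"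
  shows "gconnected (discrete_topology A) FA (g ` S)"
  unfolding gconnected_discrete_topology_iff
proof (intro conjI allI impI)
  show "g ` S \<subseteq> A"
    using S continuous_map_image_subset_topspace[OF g] by (auto simp: gconnected_def)
  fix P assume "P \<subseteq> g ` S" and closed: "\<forall>p\<in>P. \<forall>q\<in>g ` S. (p, q) \<in> FA \<longrightarrow> q \<in> P"
  have "g y \<in> P" if "x \<in> S" "g x \<in> P" "y \<in> S" for x y
    by (rule gconnected_propagate[where R = "\<lambda>u. u \<in> P", OF S g _ that]) (use closed edges in blast)
  with \<open>P \<subseteq> g ` S\<close> show "P = {} \<or> P = g ` S"
    by blast
qed

section \<open>Signings and double covers\<close>

definition balanced_signing :: "('v \<times> 'v) set \<Rightarrow> ('v \<Rightarrow> 'v \<Rightarrow> bool) \<Rightarrow> bool" where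
  "balanced_signing EA \<sigma> \<longleftrightarrow> (\<exists>\<psi>. \<forall>(a, b) \<in> EA. \<psi> b = (\<psi> a \<noteq> \<sigma> a b))"

text \<open>The double cover of a graph with signing \<sigma>: the vertex \<open>(a, i)\<close> of \<open>A \<times> {0, 1}\<close> is
  encoded as \<open>2 * a + i\<close>, so that the cover is again a graph on \<open>nat\<close>; an edge \<open>(a, b)\<close> lifts to
  edges between equal layers if \<open>\<not> \<sigma> a b\<close> and between different layers if \<open>\<sigma> a b\<close>.\<close>
definition double_cover_vertices :: "nat set \<Rightarrow> nat set" where
  "double_cover_vertices A = {n. n div 2 \<in> A}"

definition double_cover_edges :: "(nat \<times> nat) set \<Rightarrow> (nat \<Rightarrow> nat \<Rightarrow> bool) \<Rightarrow> (nat \<times> nat) set" where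
  "double_cover_edges EA \<sigma> =
     {(m, n). (m div 2, n div 2) \<in> EA \<and> odd n = (odd m \<noteq> \<sigma> (m div 2) (n div 2))}"

definition cover_lift :: "(nat \<Rightarrow> nat \<Rightarrow> bool) \<Rightarrow> nat \<Rightarrow> nat \<Rightarrow> nat" where
  "cover_lift \<sigma> m b = 2 * b + of_bool (odd m \<noteq> \<sigma> (m div 2) b)"

lemma cover_lift_div [simp]: "cover_lift \<sigma> m b div 2 = b"
  by (simp add: cover_lift_def)

lemma cover_lift_in_vertices: "b \<in> A \<Longrightarrow> cover_lift \<sigma> m b \<in> double_cover_vertices A"
  by (simp add: double_cover_vertices_def)

lemma cover_lift_edge: "(m div 2, b) \<in> EA \<Longrightarrow> (m, cover_lift \<sigma> m b) \<in> double_cover_edges EA \<sigma>"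
  by (simp add: double_cover_edges_def cover_lift_def)

lemma graph_rel_double_cover:
  assumes "graph_rel A EA" "\<And>a b. \<sigma> a b = \<sigma> b a" "\<And>a. \<not> \<sigma> a a"
  shows "graph_rel (double_cover_vertices A) (double_cover_edges EA \<sigma>)"
  using assms unfolding graph_rel_def double_cover_vertices_def double_cover_edges_def by fastforce

lemma finite_double_cover_vertices:
  assumes "finite A"
  shows "finite (double_cover_vertices A)"
proof -
  have "double_cover_vertices A \<subseteq> (\<lambda>(a, i). 2 * a + i) ` (A \<times> {0, 1})"
  proof
    fix n assume "n \<in> double_cover_vertices A"
    then have "(n div 2, n mod 2) \<in> A \<times> {0, 1}"
      by (auto simp: double_cover_vertices_def)
    then show "n \<in> (\<lambda>(a, i). 2 * a + i) ` (A \<times> {0, 1})"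
      by (rule rev_image_eqI) simp
  qed
  then show ?thesis
    by (rule finite_subset) (use assms in simp)
qed

lemma epimorphism_double_cover_projection:
  "epimorphism (discrete_topology (double_cover_vertices A)) (double_cover_edges EA \<sigma>)
     (discrete_topology A) EA (\<lambda>n. n div 2)"
proof -
  have "(\<lambda>n. n div 2) ` double_cover_vertices A = A"
    by (force simp: double_cover_vertices_def intro: rev_image_eqI[of "2 * _"])
  moreover have "(\<lambda>(m, n). (m div 2, n div 2)) ` double_cover_edges EA \<sigma> = EA"
  proof
    show "EA \<subseteq> (\<lambda>(m, n). (m div 2, n div 2)) ` double_cover_edges EA \<sigma>"
      using cover_lift_edge[where m = "2 * _"] by (force intro: rev_image_eqI)
  qed (auto simp: double_cover_edges_def)
  ultimately show ?thesis
    by (auto simp: epimorphism_def)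
qed

lemma confluent_double_cover_projection:
  assumes "graph_rel A EA" "\<And>a b. \<sigma> a b = \<sigma> b a" "\<And>a. \<not> \<sigma> a a"
  shows "confluent (discrete_topology (double_cover_vertices A)) (double_cover_edges EA \<sigma>)
           (discrete_topology A) EA (\<lambda>n. n div 2)"
    (is "confluent ?B ?EB _ _ _")
proof -
  have graph: "graph_rel (double_cover_vertices A) ?EB"
    using assms by (rule graph_rel_double_cover)
  show ?thesis
    unfolding confluent_def
  proof (intro conjI epimorphism_double_cover_projection allI impI, elim conjE)
    fix Q C
    assume "Q \<subseteq> topspace (discrete_topology A)" and Q: "gconnected (discrete_topology A) EA Q"
      and "gcomponent ?B ?EB {m \<in> topspace ?B. m div 2 \<in> Q} C"
    then have C: "C \<noteq> {}" "C \<subseteq> {m \<in> double_cover_vertices A. m div 2 \<in> Q}" "gconnected ?B ?EB C"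
      and maximal: "\<And>D. C \<subseteq> D \<Longrightarrow> D \<subseteq> {m \<in> double_cover_vertices A. m div 2 \<in> Q} \<Longrightarrow>
          gconnected ?B ?EB D \<Longrightarrow> D = C"
      unfolding gcomponent_def by auto
    have "b \<in> (\<lambda>n. n div 2) ` C"
      if a: "a \<in> (\<lambda>n. n div 2) ` C" and "b \<in> Q" and ab: "(a, b) \<in> EA" for a b
    proof -
      obtain m where m: "m \<in> C" "a = m div 2"
        using a by blast
      have "b \<in> A"
        using Q \<open>b \<in> Q\<close> by (auto simp: gconnected_def)
      have edge: "(m, cover_lift \<sigma> m b) \<in> ?EB"
        using m ab by (simp add: cover_lift_edge)
      have "gconnected ?B ?EB (insert (cover_lift \<sigma> m b) C)"
        using graph edge m(1) \<open>b \<in> A\<close>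
        by (intro gconnected_discrete_insert[OF C(3) m(1)]) (auto simp: graph_rel_def cover_lift_in_vertices)
      then have "insert (cover_lift \<sigma> m b) C = C"
        using C(2) \<open>b \<in> A\<close> \<open>b \<in> Q\<close> by (intro maximal) (auto simp: cover_lift_in_vertices)
      then show ?thesis
        by (metis cover_lift_div image_eqI insertI1)
    qed
    then have "(\<lambda>n. n div 2) ` C = {} \<or> (\<lambda>n. n div 2) ` C = Q"
      using C(2) by (intro gconnected_discrete_edge_closed[OF Q]) auto
    with C(1) show "(\<lambda>n. n div 2) ` C = Q"
      by blast
  qed
qed

lemma double_cover_sheet_transfer:
  assumes graph: "graph_rel A EA" "graph_rel (double_cover_vertices A) (double_cover_edges EA \<sigma>)"
    and P: "\<forall>p\<in>P. \<forall>q\<in>double_cover_vertices A. (p, q) \<in> double_cover_edges EA \<sigma> \<longrightarrow> q \<in> P"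
    and "(a, b) \<in> EA"
  shows "2 * b + of_bool (i \<noteq> \<sigma> a b) \<in> P \<longleftrightarrow> 2 * a + of_bool i \<in> P"
proof -
  let ?m = "2 * a + of_bool i"
  have "(?m, cover_lift \<sigma> ?m b) \<in> double_cover_edges EA \<sigma>"
    using \<open>(a, b) \<in> EA\<close> by (intro cover_lift_edge) simp
  moreover from this have "(cover_lift \<sigma> ?m b, ?m) \<in> double_cover_edges EA \<sigma>"
    using graph(2) by (simp add: graph_rel_def)
  moreover have "?m \<in> double_cover_vertices A" "cover_lift \<sigma> ?m b \<in> double_cover_vertices A"
    using graph(1) \<open>(a, b) \<in> EA\<close> by (auto simp: graph_rel_def double_cover_vertices_def)
  ultimately have "?m \<in> P \<longleftrightarrow> cover_lift \<sigma> ?m b \<in> P"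
    using P by blast
  moreover have "cover_lift \<sigma> ?m b = 2 * b + of_bool (i \<noteq> \<sigma> a b)"
    by (simp add: cover_lift_def)
  ultimately show ?thesis
    by simp
qed

text \<open>\<open>s a i\<close> stands for membership of the vertex \<open>(a, i)\<close> of the double cover in an
  edge-closed set.\<close>
lemma signing_transfer_cases:
  fixes s :: "'v \<Rightarrow> bool \<Rightarrow> bool"
  assumes conn: "gconnected (discrete_topology A) EA A" and EA: "EA \<subseteq> A \<times> A"
    and transfer: "\<And>a b i. (a, b) \<in> EA \<Longrightarrow> s b (i \<noteq> \<sigma> a b) = s a i"
    and "a0 \<in> A" "s a0 i0"
  shows "(\<forall>a\<in>A. s a True \<and> s a False) \<or> balanced_signing EA \<sigma>"
proof -
  have cont: "continuous_map (discrete_topology A) (discrete_topology UNIV) \<phi>" for \<phi> :: "'v \<Rightarrow> bool"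
    by simp
  have same: "(s a True = s a False) = (s a0 True = s a0 False)" if "a \<in> A" for a
  proof (rule gconnected_invariant[OF conn cont, where \<phi> = "\<lambda>a. s a True = s a False"])
    show "(s x True = s x False) = (s y True = s y False)" if "(x, y) \<in> EA" for x y
      using transfer[OF that, of True] transfer[OF that, of False] by (cases "\<sigma> x y") auto
  qed (use that \<open>a0 \<in> A\<close> in auto)
  show ?thesis
  proof (cases "s a0 True = s a0 False")
    case True
    with same have both: "s a True = s a False" if "a \<in> A" for a
      using that by blast
    have "s a False = s a0 False" if "a \<in> A" for a
    proof (rule gconnected_invariant[OF conn cont, where \<phi> = "\<lambda>a. s a False"])
      show "s x False = s y False" if "(x, y) \<in> EA" for x y
        using transfer[OF that, of "\<sigma> x y"] both[of x] EA that by (cases "\<sigma> x y") auto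
    qed (use that \<open>a0 \<in> A\<close> in auto)
    moreover have "s a0 False"
      using \<open>s a0 i0\<close> both[OF \<open>a0 \<in> A\<close>] by (cases i0) auto
    ultimately show ?thesis
      using both by blast
  next
    case False
    have "s b True = (s a True \<noteq> \<sigma> a b)" if "(a, b) \<in> EA" for a b
      using transfer[OF that, of True] transfer[OF that, of False] same EA that False
      by (cases "\<sigma> a b") auto
    then have "balanced_signing EA \<sigma>"
      unfolding balanced_signing_def by (intro exI[of _ "\<lambda>a. s a True"]) blast
    then show ?thesis
      by blast
  qed
qed

lemma double_cover_edge_closed_cases:
  assumes graph: "graph_rel A EA" and conn: "gconnected (discrete_topology A) EA A"
    and \<sigma>: "\<And>a b. \<sigma> a b = \<sigma> b a" "\<And>a. \<not> \<sigma> a a"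
    and P: "P \<subseteq> double_cover_vertices A" "P \<noteq> {}"
      "\<forall>p\<in>P. \<forall>q\<in>double_cover_vertices A. (p, q) \<in> double_cover_edges EA \<sigma> \<longrightarrow> q \<in> P"
  shows "P = double_cover_vertices A \<or> balanced_signing EA \<sigma>"
proof -
  define sheet where "sheet a i \<longleftrightarrow> 2 * a + of_bool i \<in> P" for a i
  have transfer: "sheet b (i \<noteq> \<sigma> a b) = sheet a i" if "(a, b) \<in> EA" for a b i
    unfolding sheet_def using graph graph_rel_double_cover[where \<sigma> = \<sigma>, OF graph \<sigma>] P(3) that
    by (rule double_cover_sheet_transfer)
  obtain p where "p \<in> P"
    using P(2) by blast
  then have "sheet (p div 2) (odd p)" "p div 2 \<in> A"
    using P(1) by (auto simp: sheet_def double_cover_vertices_def)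
  moreover have "EA \<subseteq> A \<times> A"
    using graph by (simp add: graph_rel_def)
  ultimately have "(\<forall>a\<in>A. sheet a True \<and> sheet a False) \<or> balanced_signing EA \<sigma>"
    using signing_transfer_cases[where s = sheet and \<sigma> = \<sigma>, OF conn _ transfer] by blast
  moreover have "double_cover_vertices A \<subseteq> P" if "\<forall>a\<in>A. sheet a True \<and> sheet a False"
  proof
    fix n assume "n \<in> double_cover_vertices A"
    then have "sheet (n div 2) (odd n)"
      using that by (cases "odd n") (simp_all add: double_cover_vertices_def)
    moreover have "2 * (n div 2) + of_bool (odd n) = n"
      by (simp only: of_bool_odd_eq_mod_2 mult_div_mod_eq)
    ultimately show "n \<in> P"
      unfolding sheet_def by simp
  qed
  ultimately show ?thesis
    using P(1) by blast
qed

lemma finite_connected_graph_double_cover: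
  assumes A: "finite_connected_graph A EA" and \<sigma>: "\<And>a b. \<sigma> a b = \<sigma> b a" "\<And>a. \<not> \<sigma> a a"
    and unbalanced: "\<not> balanced_signing EA \<sigma>"
  shows "finite_connected_graph (double_cover_vertices A) (double_cover_edges EA \<sigma>)"
proof -
  have graph: "graph_rel A EA" and conn: "gconnected (discrete_topology A) EA A"
    and "finite A" "A \<noteq> {}"
    using A by (auto simp: finite_connected_graph_def)
  then obtain a where "2 * a \<in> double_cover_vertices A"
    by (auto simp: double_cover_vertices_def)
  moreover have "gconnected (discrete_topology (double_cover_vertices A)) (double_cover_edges EA \<sigma>)
      (double_cover_vertices A)"
    unfolding gconnected_discrete_topology_iff
  proof (intro conjI allI impI subset_refl)
    fix P assume "P \<subseteq> double_cover_vertices A"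
      and "\<forall>p\<in>P. \<forall>q\<in>double_cover_vertices A. (p, q) \<in> double_cover_edges EA \<sigma> \<longrightarrow> q \<in> P"
    then show "P = {} \<or> P = double_cover_vertices A"
      using double_cover_edge_closed_cases[where \<sigma> = \<sigma> and P = P, OF graph conn \<sigma>] unbalanced by blast
  qed
  ultimately show ?thesis
    using graph_rel_double_cover[where \<sigma> = \<sigma>, OF graph \<sigma>] finite_double_cover_vertices[OF \<open>finite A\<close>]
    by (auto simp: finite_connected_graph_def)
qed

definition cut_signing :: "'v set \<Rightarrow> 'v set \<Rightarrow> 'v \<Rightarrow> 'v \<Rightarrow> bool" where
  "cut_signing L C a b \<longleftrightarrow> a \<in> L \<and> b \<in> L \<and> (a \<in> C) \<noteq> (b \<in> C)"

lemma cut_signing_sym: "cut_signing L C a b = cut_signing L C b a"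
  and cut_signing_irrefl: "\<not> cut_signing L C a a"
  by (auto simp: cut_signing_def)

lemma cut_side_constant:
  assumes S: "gconnected X F S" and T: "gconnected X F T"
    and g: "continuous_map X (discrete_topology A) g" "g ` T \<subseteq> L"
    and \<psi>: "continuous_map X (discrete_topology UNIV) \<psi>"
    and cut: "\<And>x y. (x, y) \<in> F \<Longrightarrow> x \<in> S \<Longrightarrow> y \<in> S \<Longrightarrow> g x \<in> L \<Longrightarrow> g y \<in> L \<Longrightarrow> (g x \<in> C \<longleftrightarrow> g y \<in> C)"
    and twist: "\<And>x y. (x, y) \<in> F \<Longrightarrow> \<psi> y = (\<psi> x \<noteq> cut_signing L C (g x) (g y))"
    and "x1 \<in> S \<inter> T" "x2 \<in> S \<inter> T"
  shows "g x1 \<in> C \<longleftrightarrow> g x2 \<in> C"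
proof -
  have "\<psi> x1 = \<psi> x2"
  proof (rule gconnected_invariant[OF S \<psi>])
    show "\<psi> x = \<psi> y" if "x \<in> S" "y \<in> S" "(x, y) \<in> F" for x y
      using twist[OF that(3)] cut[OF that(3,1,2)] by (auto simp: cut_signing_def)
  qed (use assms(8,9) in auto)
  moreover have "(\<psi> x1 \<noteq> (g x1 \<in> C)) = (\<psi> x2 \<noteq> (g x2 \<in> C))"
  proof (rule gconnected_invariant[OF T continuous_map_discrete_combine[OF \<psi> g(1)]])
    show "(\<psi> x \<noteq> (g x \<in> C)) = (\<psi> y \<noteq> (g y \<in> C))" if "x \<in> T" "y \<in> T" "(x, y) \<in> F" for x y
      using twist[OF that(3)] g(2) that(1,2) by (auto simp: cut_signing_def)
  qed (use assms(8,9) in auto)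
  ultimately show ?thesis
    by blast
qed

section \<open>Metric estimates\<close>

lemma compact_positive_lower_bound:
  fixes \<phi> :: "'a::topological_space \<Rightarrow> real"
  assumes "compact S" "continuous_on S \<phi>" "\<And>x. x \<in> S \<Longrightarrow> 0 < \<phi> x"
  shows "\<exists>\<delta>>0. \<forall>x\<in>S. \<delta> \<le> \<phi> x"
proof (cases "S = {}")
  case False
  then obtain x0 where "x0 \<in> S" "\<forall>x\<in>S. \<phi> x0 \<le> \<phi> x"
    using continuous_attains_inf[OF assms(1) False assms(2)] by blast
  with assms(3) show ?thesis
    by blast
qed (auto intro: exI[of _ 1])

lemma compact_pairs_infdist_margin:
  fixes E :: "('a::metric_space \<times> 'a) set"
  assumes "compact E" "closed M1" "closed M2" "M1 \<noteq> {}" "M2 \<noteq> {}"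
    and "E \<inter> M1 \<times> M2 = {}"
  shows "\<exists>\<eta>>0. \<forall>x y. (x, y) \<in> E \<longrightarrow> \<eta> \<le> infdist x M1 + infdist y M2"
proof -
  have "0 < infdist (fst p) M1 + infdist (snd p) M2" if "p \<in> E" for p
  proof -
    have "\<not> (infdist (fst p) M1 = 0 \<and> infdist (snd p) M2 = 0)"
      using assms that in_closed_iff_infdist_zero by (metis disjoint_iff mem_Times_iff)
    then show ?thesis
      using infdist_nonneg[of "fst p" M1] infdist_nonneg[of "snd p" M2] by linarith
  qed
  moreover have "continuous_on E (\<lambda>p. infdist (fst p) M1 + infdist (snd p) M2)"
    by (intro continuous_intros)
  ultimately obtain \<eta> where "\<eta> > 0" "\<forall>p\<in>E. \<eta> \<le> infdist (fst p) M1 + infdist (snd p) M2"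
    using compact_positive_lower_bound[OF assms(1)] by blast
  then show ?thesis
    by (intro exI[of _ \<eta>]) force
qed

lemma compact_close_points_in_open:
  fixes K L :: "'a::metric_space set"
  assumes "compact K" "compact L" "open U" "K \<inter> L \<subseteq> U"
  shows "\<exists>\<epsilon>>0. \<forall>k\<in>K. \<forall>l\<in>L. dist k l < \<epsilon> \<longrightarrow> k \<in> U"
proof -
  have "compact ((K - U) \<times> L)"
    using assms by (intro compact_Times compact_diff)
  moreover have "continuous_on ((K - U) \<times> L) (\<lambda>p. dist (fst p) (snd p))"
    by (intro continuous_intros)
  moreover have "0 < dist (fst p) (snd p)" if "p \<in> (K - U) \<times> L" for p
    using that assms(4) by auto
  ultimately obtain \<delta> where "\<delta> > 0" "\<forall>p\<in>(K - U) \<times> L. \<delta> \<le> dist (fst p) (snd p)"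
    using compact_positive_lower_bound[of "(K - U) \<times> L" "\<lambda>p. dist (fst p) (snd p)"] by blast
  then show ?thesis
    by (intro exI[of _ \<delta>]) force
qed

lemma not_gconnected_compact_split:
  fixes V :: "'a::metric_space set"
  assumes "\<not> gconnected (top_of_set V) E S" "compact S" "S \<subseteq> V"
  obtains M1 M2 where "compact M1" "compact M2" "M1 \<noteq> {}" "M2 \<noteq> {}" "M1 \<union> M2 = S"
    "E \<inter> M1 \<times> M2 = {}"
proof -
  obtain M1 M2 where M: "M1 \<noteq> {}" "M2 \<noteq> {}" "M1 \<union> M2 = S"
    "closedin (top_of_set S) M1" "closedin (top_of_set S) M2" "\<forall>p\<in>M1. \<forall>q\<in>M2. (p, q) \<notin> E"
    using assms(1,3) by (auto simp: gconnected_def gdisconnected_def subtopology_subtopology Int_absorb1)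
  then have "compact M1" "compact M2"
    using closedin_compact[OF \<open>compact S\<close>] by auto
  with M that show ?thesis
    by blast
qed

lemma compact_separation_margins:
  fixes K L :: "'a::metric_space set"
  assumes "compact E" "compact K" "compact L" "compact M1" "compact M2" "M1 \<noteq> {}" "M2 \<noteq> {}"
    and M: "M1 \<union> M2 = K \<inter> L" and "E \<inter> M1 \<times> M2 = {}"
  obtains \<eta> \<epsilon> where "\<eta> > 0" "\<epsilon> > 0" "\<epsilon> \<le> \<eta> / 8"
    "\<And>x y. (x, y) \<in> E \<Longrightarrow> \<eta> \<le> infdist x M1 + infdist y M2"
    "\<And>k l. k \<in> K \<Longrightarrow> l \<in> L \<Longrightarrow> dist k l < \<epsilon> \<Longrightarrow> infdist k M1 < \<eta> / 4 \<or> infdist k M2 < \<eta> / 4"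
proof -
  have "\<exists>\<eta>>0. \<forall>x y. (x, y) \<in> E \<longrightarrow> \<eta> \<le> infdist x M1 + infdist y M2"
    by (rule compact_pairs_infdist_margin) (use assms compact_imp_closed in auto)
  then obtain \<eta> where "\<eta> > 0" and margin: "\<And>x y. (x, y) \<in> E \<Longrightarrow> \<eta> \<le> infdist x M1 + infdist y M2"
    by blast
  have "open ({x. infdist x M1 < \<eta> / 4} \<union> {x. infdist x M2 < \<eta> / 4})"
    by (intro open_Un open_Collect_less continuous_intros)
  moreover have "K \<inter> L \<subseteq> {x. infdist x M1 < \<eta> / 4} \<union> {x. infdist x M2 < \<eta> / 4}"
    unfolding M[symmetric] using \<open>\<eta> > 0\<close> by auto
  ultimately have "\<exists>\<epsilon>>0. \<forall>k\<in>K. \<forall>l\<in>L. dist k l < \<epsilon> \<longrightarrow>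
      k \<in> {x. infdist x M1 < \<eta> / 4} \<union> {x. infdist x M2 < \<eta> / 4}"
    by (rule compact_close_points_in_open[OF assms(2,3)])
  then obtain \<epsilon> where "\<epsilon> > 0"
    and "\<forall>k\<in>K. \<forall>l\<in>L. dist k l < \<epsilon> \<longrightarrow> k \<in> {x. infdist x M1 < \<eta> / 4} \<union> {x. infdist x M2 < \<eta> / 4}"
    by blast
  then have "infdist k M1 < \<eta> / 4 \<or> infdist k M2 < \<eta> / 4"
    if "k \<in> K" "l \<in> L" "dist k l < min (\<eta> / 8) \<epsilon>" for k l
    using that by auto
  with that[of \<eta> "min (\<eta> / 8) \<epsilon>"] margin \<open>\<eta> > 0\<close> \<open>\<epsilon> > 0\<close> show ?thesis
    by auto
qed

lemma small_fibres_cut: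
  fixes f :: "'a::metric_space \<Rightarrow> 'b"
  assumes margin: "\<And>x y. (x, y) \<in> E \<Longrightarrow> \<eta> \<le> infdist x M1 + infdist y M2"
    and near: "\<And>k l. k \<in> K \<Longrightarrow> l \<in> L \<Longrightarrow> dist k l < \<epsilon> \<Longrightarrow> infdist k M1 < \<eta> / 4 \<or> infdist k M2 < \<eta> / 4"
    and fibres: "\<And>x y. x \<in> V \<Longrightarrow> y \<in> V \<Longrightarrow> f x = f y \<Longrightarrow> dist x y < \<epsilon>"
    and "\<eta> > 0" "\<epsilon> \<le> \<eta> / 8" "E \<subseteq> V \<times> V" "K \<subseteq> V" "L \<subseteq> V"
    and C: "C = {a. \<exists>x\<in>V. f x = a \<and> infdist x M2 < \<eta> / 2}"
  shows small_fibres_cut_edge: "(x, y) \<in> E \<Longrightarrow> f y \<in> C \<Longrightarrow> f x \<in> f ` K \<inter> f ` L \<Longrightarrow> f x \<in> C"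
    and small_fibres_cut_M1: "x \<in> M1 \<Longrightarrow> (x, x) \<in> E \<Longrightarrow> f x \<notin> C"
    and small_fibres_cut_M2: "x \<in> M2 \<Longrightarrow> x \<in> V \<Longrightarrow> f x \<in> C"
proof -
  assume xy: "(x, y) \<in> E" and "f y \<in> C" and x: "f x \<in> f ` K \<inter> f ` L"
  obtain y' where y': "y' \<in> V" "f y' = f y" "infdist y' M2 < \<eta> / 2"
    using \<open>f y \<in> C\<close> C by blast
  obtain k l where kl: "k \<in> K" "l \<in> L" "f k = f x" "f l = f x"
    using x by auto
  have "x \<in> V" "y \<in> V" "k \<in> V" "l \<in> V"
    using xy kl \<open>E \<subseteq> V \<times> V\<close> \<open>K \<subseteq> V\<close> \<open>L \<subseteq> V\<close> by auto
  show "f x \<in> C"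
  proof (rule ccontr)
    assume "f x \<notin> C"
    then have "\<eta> / 2 \<le> infdist k M2"
      using C \<open>k \<in> V\<close> kl(3) by force
    moreover have "dist k l < \<epsilon>"
      using fibres \<open>k \<in> V\<close> \<open>l \<in> V\<close> kl(3,4) by simp
    ultimately have "infdist k M1 < \<eta> / 4"
      using near[OF kl(1,2)] \<open>\<eta> > 0\<close> by linarith
    moreover have "infdist x M1 \<le> infdist k M1 + dist x k" "infdist y M2 \<le> infdist y' M2 + dist y y'"
      by (rule infdist_triangle)+
    moreover have "dist x k < \<epsilon>" "dist y y' < \<epsilon>"
      using fibres \<open>x \<in> V\<close> \<open>y \<in> V\<close> \<open>k \<in> V\<close> y' kl by auto
    ultimately show False
      using margin[OF xy] y'(3) \<open>\<epsilon> \<le> \<eta> / 8\<close> by linarith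
  qed
next
  assume "x \<in> M1" "(x, x) \<in> E"
  show "f x \<notin> C"
  proof
    assume "f x \<in> C"
    then obtain x' where x': "x' \<in> V" "f x' = f x" "infdist x' M2 < \<eta> / 2"
      using C by blast
    have "infdist x M2 \<le> infdist x' M2 + dist x x'"
      by (rule infdist_triangle)
    moreover have "dist x x' < \<epsilon>"
      using fibres \<open>(x, x) \<in> E\<close> \<open>E \<subseteq> V \<times> V\<close> x' by auto
    ultimately show False
      using margin[OF \<open>(x, x) \<in> E\<close>] \<open>x \<in> M1\<close> x'(3) \<open>\<epsilon> \<le> \<eta> / 8\<close> \<open>\<eta> > 0\<close> by simp
  qed
next
  assume "x \<in> M2" "x \<in> V"
  then show "f x \<in> C"
    using C \<open>\<eta> > 0\<close> by force
qed

section \<open>Intersections of compact connected subsets of G\<close>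

lemma confluent_imp_edge:
  "confluent X F Y FY f \<Longrightarrow> (x, y) \<in> F \<Longrightarrow> (f x, f y) \<in> FY"
  by (force simp: confluent_def epimorphism_def)

lemma Fraisse_limit_G_compact:
  assumes "is_Fraisse_limit_G V E"
  shows "compact V" "compact E" "graph_rel V E"
proof -
  have "graph_rel V E" and "compact_space (top_of_set V)"
    and E: "closedin (top_of_set (V \<times> V)) E"
    using assms by (simp_all add: is_Fraisse_limit_G_def topological_graph_def)
  then show "compact V" "graph_rel V E"
    by (simp_all add: compact_space_def compactin_subtopology)
  then show "compact E"
    using E by (intro closedin_compact[OF compact_Times]) auto
qed

lemma Fraisse_limit_G_small_fibres:
  assumes G: "is_Fraisse_limit_G V E" and "\<epsilon> > 0"
  obtains A EA f where "finite_connected_graph A EA" "confluent (top_of_set V) E (discrete_topology A) EA f"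
    "\<And>x y. x \<in> V \<Longrightarrow> y \<in> V \<Longrightarrow> f x = f y \<Longrightarrow> dist x y < \<epsilon>"
proof -
  obtain A EA f where A: "finite_connected_graph A EA"
    and f: "confluent (top_of_set V) E (discrete_topology A) EA f"
    and diam: "\<forall>a\<in>A. diameter {x \<in> V. f x = a} < \<epsilon>"
    using G \<open>\<epsilon> > 0\<close> unfolding is_Fraisse_limit_G_def by blast
  have "f ` V = A"
    using f by (simp add: confluent_def epimorphism_def)
  have "dist x y < \<epsilon>" if "x \<in> V" "y \<in> V" "f x = f y" for x y
  proof -
    have "bounded {z \<in> V. f z = f x}"
      using compact_imp_bounded[OF Fraisse_limit_G_compact(1)[OF G]] by (rule bounded_subset) blast
    then have "dist x y \<le> diameter {z \<in> V. f z = f x}"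
      using that by (intro diameter_bounded_bound) auto
    also have "\<dots> < \<epsilon>"
      using diam \<open>f ` V = A\<close> that(1) by blast
    finally show ?thesis .
  qed
  with A f that show ?thesis
    by blast
qed

lemma confluent_balanced_cut_constant:
  assumes f: "confluent X F (discrete_topology A) EA f"
    and K: "gconnected X F K" and L: "gconnected X F L"
    and cut: "\<And>x y. (x, y) \<in> F \<Longrightarrow> f x \<in> f ` K \<inter> f ` L \<Longrightarrow> f y \<in> f ` K \<inter> f ` L \<Longrightarrow>
      (f x \<in> C \<longleftrightarrow> f y \<in> C)"
    and balanced: "balanced_signing EA (cut_signing (f ` L) C)"
    and "x1 \<in> K \<inter> L" "x2 \<in> K \<inter> L"
  shows "f x1 \<in> C \<longleftrightarrow> f x2 \<in> C"
proof -
  have f_cont: "continuous_map X (discrete_topology A) f"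
    and f_edges: "(\<lambda>(x, y). (f x, f y)) ` F = EA"
    using f by (auto simp: confluent_def epimorphism_def)
  obtain \<psi> where \<psi>: "\<And>a b. (a, b) \<in> EA \<Longrightarrow> \<psi> b = (\<psi> a \<noteq> cut_signing (f ` L) C a b)"
    using balanced unfolding balanced_signing_def by blast
  have "id (f x1) \<in> C \<longleftrightarrow> id (f x2) \<in> C"
  proof (rule cut_side_constant[where g = id and L = "f ` L"])
    show "gconnected (discrete_topology A) EA (f ` K)" "gconnected (discrete_topology A) EA (f ` L)"
      using K L by (auto intro: gconnected_image_discrete[OF _ f_cont] confluent_imp_edge[OF f])
    show "id a \<in> C \<longleftrightarrow> id b \<in> C"
      if ab: "(a, b) \<in> EA" and "a \<in> f ` K" "b \<in> f ` K" "id a \<in> f ` L" "id b \<in> f ` L" for a b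
    proof -
      obtain x y where "(x, y) \<in> F" "a = f x" "b = f y"
        using ab unfolding f_edges[symmetric] by auto
      with that(2-5) show ?thesis
        using cut[of x y] by auto
    qed
    show "\<psi> b = (\<psi> a \<noteq> cut_signing (f ` L) C (id a) (id b))" if "(a, b) \<in> EA" for a b
      using \<psi>[OF that] by simp
    show "f x1 \<in> f ` K \<inter> f ` L" "f x2 \<in> f ` K \<inter> f ` L"
      using assms(6,7) by auto
  qed (use f_cont in auto)
  then show ?thesis
    by simp
qed

lemma Fraisse_limit_G_cut_constant:
  assumes G: "is_Fraisse_limit_G V E"
    and A: "finite_connected_graph A EA" and f: "confluent (top_of_set V) E (discrete_topology A) EA f"
    and K: "gconnected (top_of_set V) E K" and L: "gconnected (top_of_set V) E L"
    and cut: "\<And>x y. (x, y) \<in> E \<Longrightarrow> f x \<in> f ` K \<inter> f ` L \<Longrightarrow> f y \<in> f ` K \<inter> f ` L \<Longrightarrow>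
      (f x \<in> C \<longleftrightarrow> f y \<in> C)"
    and "x1 \<in> K \<inter> L" "x2 \<in> K \<inter> L"
  shows "f x1 \<in> C \<longleftrightarrow> f x2 \<in> C"
proof (cases "balanced_signing EA (cut_signing (f ` L) C)")
  case True
  with f K L cut show ?thesis
    using assms(7,8) by (rule confluent_balanced_cut_constant)
next
  case False
  let ?\<sigma> = "cut_signing (f ` L) C"
  let ?B = "double_cover_vertices A" and ?EB = "double_cover_edges EA ?\<sigma>"
  have "graph_rel A EA"
    using A by (simp add: finite_connected_graph_def)
  then have "confluent (discrete_topology ?B) ?EB (discrete_topology A) EA (\<lambda>n. n div 2)"
    using cut_signing_sym cut_signing_irrefl by (rule confluent_double_cover_projection)
  moreover have "finite_connected_graph ?B ?EB"
    using A cut_signing_sym cut_signing_irrefl False by (rule finite_connected_graph_double_cover)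
  ultimately obtain h where h: "confluent (top_of_set V) E (discrete_topology ?B) ?EB h"
    and f_h: "\<And>x. x \<in> V \<Longrightarrow> f x = h x div 2"
    using G A f unfolding is_Fraisse_limit_G_def by blast
  have h_cont: "continuous_map (top_of_set V) (discrete_topology ?B) h"
    using h by (simp add: confluent_def epimorphism_def)
  have "E \<subseteq> V \<times> V"
    using G by (simp add: is_Fraisse_limit_G_def topological_graph_def graph_rel_def)
  have twist: "odd (h y) = (odd (h x) \<noteq> ?\<sigma> (f x) (f y))" if "(x, y) \<in> E" for x y
    using confluent_imp_edge[OF h that] f_h \<open>E \<subseteq> V \<times> V\<close> that
    by (auto simp: double_cover_edges_def)
  have parity_cont: "continuous_map (top_of_set V) (discrete_topology UNIV) (\<lambda>x. odd (h x))"
    using continuous_map_discrete_combine[OF h_cont h_cont, where h = "\<lambda>m n. odd m"] .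
  have f_cont: "continuous_map (top_of_set V) (discrete_topology A) f"
    using f by (simp add: confluent_def epimorphism_def)
  show ?thesis
  proof (rule cut_side_constant[where S = K and T = L and g = f and L = "f ` L" and \<psi> = "\<lambda>x. odd (h x)"])
    show "f x \<in> C \<longleftrightarrow> f y \<in> C"
      if "(x, y) \<in> E" "x \<in> K" "y \<in> K" "f x \<in> f ` L" "f y \<in> f ` L" for x y
      using cut that by blast
  qed (use K L f_cont parity_cont twist assms(7,8) in auto)
qed

theorem Fraisse_limit_G_gconnected_Int:
  assumes G: "is_Fraisse_limit_G V E"
    and K: "gconnected (top_of_set V) E K" "compact K"
    and L: "gconnected (top_of_set V) E L" "compact L"
  shows "gconnected (top_of_set V) E (K \<inter> L)"
proof (rule ccontr)
  have "graph_rel V E" "compact E"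
    using Fraisse_limit_G_compact[OF G] by auto
  then have "E \<subseteq> V \<times> V" and E_refl: "\<And>x. x \<in> V \<Longrightarrow> (x, x) \<in> E"
    and E_sym: "\<And>x y. (x, y) \<in> E \<Longrightarrow> (y, x) \<in> E"
    by (auto simp: graph_rel_def)
  have "K \<subseteq> V" "L \<subseteq> V"
    using K L by (auto simp: gconnected_def)
  assume "\<not> gconnected (top_of_set V) E (K \<inter> L)"
  moreover have "K \<inter> L \<subseteq> V"
    using \<open>K \<subseteq> V\<close> by blast
  ultimately obtain M1 M2 where M: "compact M1" "compact M2" "M1 \<noteq> {}" "M2 \<noteq> {}" "M1 \<union> M2 = K \<inter> L"
    "E \<inter> M1 \<times> M2 = {}"
    using not_gconnected_compact_split compact_Int[OF K(2) L(2)] by metis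
  obtain \<eta> \<epsilon> where "\<eta> > 0" "\<epsilon> > 0" "\<epsilon> \<le> \<eta> / 8"
    and margin: "\<And>x y. (x, y) \<in> E \<Longrightarrow> \<eta> \<le> infdist x M1 + infdist y M2"
    and near: "\<And>k l. k \<in> K \<Longrightarrow> l \<in> L \<Longrightarrow> dist k l < \<epsilon> \<Longrightarrow> infdist k M1 < \<eta> / 4 \<or> infdist k M2 < \<eta> / 4"
    using compact_separation_margins[OF \<open>compact E\<close> K(2) L(2) M] by blast
  obtain A EA f where A: "finite_connected_graph A EA" and f: "confluent (top_of_set V) E (discrete_topology A) EA f"
    and fibres: "\<And>x y. x \<in> V \<Longrightarrow> y \<in> V \<Longrightarrow> f x = f y \<Longrightarrow> dist x y < \<epsilon>"
    using Fraisse_limit_G_small_fibres[OF G \<open>\<epsilon> > 0\<close>] by blast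
  define C where "C = {a. \<exists>x\<in>V. f x = a \<and> infdist x M2 < \<eta> / 2}"
  note cut_facts = margin near fibres \<open>\<eta> > 0\<close> \<open>\<epsilon> \<le> \<eta> / 8\<close> \<open>E \<subseteq> V \<times> V\<close> \<open>K \<subseteq> V\<close> \<open>L \<subseteq> V\<close> C_def
  have cut_edge: "f x \<in> C" if "(x, y) \<in> E" "f y \<in> C" "f x \<in> f ` K \<inter> f ` L" for x y
    using cut_facts that by (rule small_fibres_cut_edge)
  obtain x1 x2 where "x1 \<in> M1" "x2 \<in> M2"
    using M(3,4) by blast
  then have "x1 \<in> K \<inter> L" "x2 \<in> K \<inter> L" "x1 \<in> V" "x2 \<in> V"
    using M(5) \<open>K \<subseteq> V\<close> by auto
  have "f x1 \<in> C \<longleftrightarrow> f x2 \<in> C"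
  proof (rule Fraisse_limit_G_cut_constant[OF G A f K(1) L(1)])
    show "f x \<in> C \<longleftrightarrow> f y \<in> C" if "(x, y) \<in> E" "f x \<in> f ` K \<inter> f ` L" "f y \<in> f ` K \<inter> f ` L" for x y
      using cut_edge[OF that(1) _ that(2)] cut_edge[OF E_sym[OF that(1)] _ that(3)] by blast
  qed fact+
  moreover have "f x1 \<notin> C"
    using cut_facts \<open>x1 \<in> M1\<close> E_refl[OF \<open>x1 \<in> V\<close>] by (rule small_fibres_cut_M1)
  moreover have "f x2 \<in> C"
    using cut_facts \<open>x2 \<in> M2\<close> \<open>x2 \<in> V\<close> by (rule small_fibres_cut_M2)
  ultimately show False
    by blast
qed

section \<open>The continuum |G|\<close>

lemma connectedin_image_gconnected:
  assumes S: "gconnected X F S" and q: "continuous_map X Y q"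
    and collapse: "\<And>x y. (x, y) \<in> F \<Longrightarrow> q x = q y"
  shows "connectedin Y (q ` S)"
proof -
  have "S \<subseteq> topspace X"
    using S by (simp add: gconnected_def)
  then have "q ` S \<subseteq> topspace Y"
    using continuous_map_image_subset_topspace[OF q] by blast
  moreover have False
    if "closedin Y E1" "closedin Y E2" "q ` S \<subseteq> E1 \<union> E2" "E1 \<inter> E2 \<inter> q ` S = {}"
      "E1 \<inter> q ` S \<noteq> {}" "E2 \<inter> q ` S \<noteq> {}" for E1 E2
  proof -
    have closed: "closedin (subtopology X S) {x \<in> S. q x \<in> E}" if "closedin Y E" for E
    proof -
      have "{x \<in> S. q x \<in> E} = S \<inter> {x \<in> topspace X. q x \<in> E}"
        using \<open>S \<subseteq> topspace X\<close> by blast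
      then show ?thesis
        using closedin_continuous_map_preimage[OF q that] by (simp add: closedin_subtopology_Int_closed)
    qed
    have "gdisconnected X F S"
      unfolding gdisconnected_def
    proof (intro exI conjI ballI)
      show "{x \<in> S. q x \<in> E1} \<noteq> {}" "{x \<in> S. q x \<in> E2} \<noteq> {}"
        using that(5,6) by blast+
      show "{x \<in> S. q x \<in> E1} \<union> {x \<in> S. q x \<in> E2} = S" "{x \<in> S. q x \<in> E1} \<inter> {x \<in> S. q x \<in> E2} = {}"
        using that(3,4) by blast+
      show "(x, y) \<notin> F" if "x \<in> {x \<in> S. q x \<in> E1}" "y \<in> {x \<in> S. q x \<in> E2}" for x y
        using that collapse \<open>E1 \<inter> E2 \<inter> q ` S = {}\<close> by fastforce
    qed (use closed that(1,2) in auto)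
    with S show False
      by (simp add: gconnected_def)
  qed
  ultimately show ?thesis
    unfolding connectedin_closedin by blast
qed

lemma gconnected_preimage_connectedin:
  assumes q: "closed_map X Y q" and K: "connectedin Y K" "K \<subseteq> q ` topspace X"
    and identify: "\<And>x y. x \<in> topspace X \<Longrightarrow> y \<in> topspace X \<Longrightarrow> q x = q y \<Longrightarrow> (x, y) \<in> F"
    and closed: "closedin X {x \<in> topspace X. q x \<in> K}"
  shows "gconnected X F {x \<in> topspace X. q x \<in> K}" (is "gconnected X F ?K")
  unfolding gconnected_def
proof (intro conjI notI)
  assume "gdisconnected X F ?K"
  then obtain P Q where PQ: "P \<noteq> {}" "Q \<noteq> {}" "P \<union> Q = ?K" "P \<inter> Q = {}"
    "closedin (subtopology X ?K) P" "closedin (subtopology X ?K) Q" "\<forall>p\<in>P. \<forall>q\<in>Q. (p, q) \<notin> F"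
    unfolding gdisconnected_def by blast
  have "closedin Y (q ` P)" "closedin Y (q ` Q)"
    using PQ(5,6) closedin_trans_full[OF _ closed] q by (auto simp: closed_map_def)
  moreover have "K \<subseteq> q ` P \<union> q ` Q"
    using K(2) PQ(3) by blast
  moreover have "q ` P \<inter> q ` Q \<inter> K = {}"
    using PQ(3,7) identify by fastforce
  moreover have "q ` P \<inter> K \<noteq> {}" "q ` Q \<inter> K \<noteq> {}"
    using PQ(1-3) by blast+
  ultimately show False
    using K(1) unfolding connectedin_closedin by blast
qed auto

lemma compact_saturation:
  fixes V :: "'a::metric_space set"
  assumes "compact E" "E \<subseteq> V \<times> V" "compact F" "F \<subseteq> V"
    and identify: "\<And>x y. x \<in> V \<Longrightarrow> y \<in> V \<Longrightarrow> q x = q y \<longleftrightarrow> (x, y) \<in> E"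
  shows "compact {x \<in> V. q x \<in> q ` F}"
proof -
  have "{x \<in> V. q x \<in> q ` F} = snd ` (E \<inter> F \<times> UNIV)"
  proof (intro set_eqI iffI)
    fix x assume "x \<in> {x \<in> V. q x \<in> q ` F}"
    then obtain y where "x \<in> V" "y \<in> F" "q y = q x"
      by auto
    then have "(y, x) \<in> E"
      using identify \<open>F \<subseteq> V\<close> by blast
    with \<open>y \<in> F\<close> show "x \<in> snd ` (E \<inter> F \<times> UNIV)"
      by (intro image_eqI[of _ _ "(y, x)"]) auto
  next
    fix x assume "x \<in> snd ` (E \<inter> F \<times> UNIV)"
    then obtain y where "(y, x) \<in> E" "y \<in> F"
      by auto
    moreover from this have "x \<in> V" "y \<in> V"
      using \<open>E \<subseteq> V \<times> V\<close> by auto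
    ultimately show "x \<in> {x \<in> V. q x \<in> q ` F}"
      using identify by (metis (mono_tags, lifting) image_eqI mem_Collect_eq)
  qed
  moreover have "compact (E \<inter> F \<times> UNIV)"
    using assms(1) by (rule compact_Int_closed) (intro closed_Times compact_imp_closed assms(3) closed_UNIV)
  then have "compact (snd ` (E \<inter> F \<times> UNIV))"
    by (intro compact_continuous_image continuous_intros)
  ultimately show ?thesis
    by simp
qed

lemma proper_map_quotient_compact_relation:
  fixes V :: "'a::metric_space set"
  assumes q: "quotient_map (top_of_set V) Y q" and "compact V" "compact E" "E \<subseteq> V \<times> V"
    and identify: "\<And>x y. x \<in> V \<Longrightarrow> y \<in> V \<Longrightarrow> q x = q y \<longleftrightarrow> (x, y) \<in> E"
  shows "proper_map (top_of_set V) Y q"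
  unfolding proper_map_def closed_map_def
proof (intro conjI allI impI ballI)
  have Y: "topspace Y = q ` V"
    using q by (simp add: quotient_map_def)
  fix F assume F: "closedin (top_of_set V) F"
  then have "compact F" "F \<subseteq> V"
    using closedin_compact[OF \<open>compact V\<close>] closedin_imp_subset[OF F] by auto
  then have "closedin (top_of_set V) {x \<in> V. q x \<in> q ` F}"
    using compact_saturation[OF assms(3,4) _ _ identify] by (intro closed_subset compact_imp_closed) auto
  moreover have "q ` F \<subseteq> topspace Y"
    using Y \<open>F \<subseteq> V\<close> by blast
  ultimately show "closedin Y (q ` F)"
    using q unfolding quotient_map_closedin by simp
next
  fix y assume "y \<in> topspace Y"
  then obtain x0 where "x0 \<in> V" "y = q x0"
    using q by (auto simp: quotient_map_def)
  then have "{x \<in> V. q x = y} = {x \<in> V. q x \<in> q ` {x0}}"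
    by auto
  also have "compact \<dots>"
    using \<open>x0 \<in> V\<close> by (intro compact_saturation[OF assms(3,4) _ _ identify]) auto
  finally show "compactin (top_of_set V) {x \<in> topspace (top_of_set V). q x = y}"
    by (auto simp: compactin_subtopology)
qed

lemma subcontinuum_preimage:
  fixes V :: "'a::metric_space set"
  assumes proper: "proper_map (top_of_set V) Y q" and "q ` V = topspace Y"
    and identify: "\<And>x y. x \<in> V \<Longrightarrow> y \<in> V \<Longrightarrow> q x = q y \<Longrightarrow> (x, y) \<in> E"
    and K: "subcontinuum Y K"
  shows "compact {x \<in> V. q x \<in> K}" "gconnected (top_of_set V) E {x \<in> V. q x \<in> K}"
proof -
  have "compactin (top_of_set V) {x \<in> V. q x \<in> K}"
    using compactin_proper_map_preimage[OF proper] K by (simp add: subcontinuum_def)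
  then show compact: "compact {x \<in> V. q x \<in> K}"
    by (simp add: compactin_subtopology)
  have "gconnected (top_of_set V) E {x \<in> topspace (top_of_set V). q x \<in> K}"
  proof (rule gconnected_preimage_connectedin)
    show "closedin (top_of_set V) {x \<in> topspace (top_of_set V). q x \<in> K}"
      using compact by (simp add: closed_subset compact_imp_closed)
  qed (use proper K \<open>q ` V = topspace Y\<close> identify in \<open>auto simp: proper_map_def subcontinuum_def\<close>)
  then show "gconnected (top_of_set V) E {x \<in> V. q x \<in> K}"
    by simp
qed

theorem mainTheorem15:
  fixes V :: "'a::metric_space set" and E :: "('a \<times> 'a) set"
    and Y :: "'b topology" and q :: "'a \<Rightarrow> 'b"
  assumes "is_Fraisse_limit_G V E"
    and "quotient_map (top_of_set V) Y q"
    and "\<And>x y. x \<in> V \<Longrightarrow> y \<in> V \<Longrightarrow> (q x = q y \<longleftrightarrow> (x, y) \<in> E)"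
  shows "hereditarily_unicoherent Y"
  unfolding hereditarily_unicoherent_def
proof (intro allI impI, elim conjE)
  note G = assms(1) and q = assms(2) and identify = assms(3)
  fix K L assume K: "subcontinuum Y K" and L: "subcontinuum Y L"
  have "compact V" "compact E" and E: "E \<subseteq> V \<times> V"
    using Fraisse_limit_G_compact[OF G] by (auto simp: graph_rel_def)
  have proper: "proper_map (top_of_set V) Y q"
    using q \<open>compact V\<close> \<open>compact E\<close> E identify by (rule proper_map_quotient_compact_relation)
  have onto: "q ` V = topspace Y"
    using q by (simp add: quotient_map_def)
  have identified: "\<And>x y. x \<in> V \<Longrightarrow> y \<in> V \<Longrightarrow> q x = q y \<Longrightarrow> (x, y) \<in> E"
    using identify by blast
  note K_pre = subcontinuum_preimage[OF proper onto identified K]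
    and L_pre = subcontinuum_preimage[OF proper onto identified L]
  have "gconnected (top_of_set V) E ({x \<in> V. q x \<in> K} \<inter> {x \<in> V. q x \<in> L})"
    by (rule Fraisse_limit_G_gconnected_Int[OF G K_pre(2,1) L_pre(2,1)])
  then have "connectedin Y (q ` ({x \<in> V. q x \<in> K} \<inter> {x \<in> V. q x \<in> L}))"
    using quotient_imp_continuous_map[OF q] identify E by (intro connectedin_image_gconnected) auto
  moreover have "q ` ({x \<in> V. q x \<in> K} \<inter> {x \<in> V. q x \<in> L}) = K \<inter> L"
    using K onto by (auto simp: subcontinuum_def)
  ultimately show "connectedin Y (K \<inter> L)"
    by simp
qed

end
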